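(* Let $q$ be a prime power with $q\equiv2\pmod 3$, let $m,n$ be positive integers, let $\omega\in\mathbb{F}_{q^2}$ be an element of multiplicative order $3$, and let $\varepsilon\in\mathbb{F}_q^*\cup\{\pm\omega,\pm\omega^2\}$. Put $f(x)=(x+\omega x^q)^m+\varepsilon(\omega x+x^q)^n$. Then: (i) if $\varepsilon\in\mathbb{F}_q^*$, $f$ permutes $\mathbb{F}_{q^2}$ if and only if $\gcd(mn,q-1)=1$ and $3\nmid(m-n)$; (ii) if $\varepsilon=\pm\omega$, $f$ permutes $\mathbb{F}_{q^2}$ if and only if $\gcd(mn,q-1)=1$ and $3\nmid(1+m-n)$; (iii) if $\varepsilon=\pm\omega^2$, $f$ permutes $\mathbb{F}_{q^2}$ if and only if $\gcd(mn,q-1)=1$ and $3\nmid(2+m-n)$.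
   Context: $f$ permutes $\mathbb{F}_{q^2}$ means the map $x\mapsto f(x)$ on $\mathbb{F}_{q^2}$ is bijective. *)

theory Defs
  imports "HOL-Computational_Algebra.Primes"
begin

(* F_q as the subfield {x. x^q = x} of a finite field with q^2 elements;
   F_q^* = its nonzero elements *)
definition subfield_q_star :: "nat \<Rightarrow> ('a::field) set" where
  "subfield_q_star q = {x. x ^ q = x \<and> x \<noteq> 0}"

definition permutes_field :: "('a \<Rightarrow> 'a) \<Rightarrow> bool" where
  "permutes_field f \<longleftrightarrow> bij f"

end

(* Write x = a + b\<omega> with a, b in F_q = {x. x^q = x}: this is a basis since \<omega> \<notin> F_q, and the
   Frobenius fixes a, b and sends \<omega> to \<omega>^2 because q = 2 mod 3. Hence x + \<omega>x^q = -\<omega>^2 (a + b)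
   and \<omega>x + x^q = \<omega>^2 (2b - a), and (a, b) \<mapsto> (a + b, 2b - a) is invertible over F_q as 3 \<noteq> 0.
   So f permutes F_(q^2) iff (u, v) \<mapsto> A u^m + B v^n is injective on F_q x F_q, where
   A = (-\<omega>^2)^m and B = \<epsilon> \<omega>^(2n). This happens iff u \<mapsto> u^m and v \<mapsto> v^n permute F_q,
   i.e. gcd(mn, q - 1) = 1, and B/A \<notin> F_q. Writing \<epsilon> = s \<omega>^e with s in F_q^* and e = 0, 1, 2,
   B/A = \<plusminus>s \<omega>^(e + 2n + m), which lies in F_q iff 3 divides e + 2n + m, i.e. e + m - n. *)

theory Submission
  imports Defs "HOL-Number_Theory.Residues" "HOL-Computational_Algebra.Polynomial"
begin

lemma power_card_UNIV_eq_self: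
  fixes x :: "'a::{field,finite}"
  shows "x ^ card (UNIV :: 'a set) = x"
proof (cases "x = 0")
  case True
  then show ?thesis by (simp add: finite_UNIV_card_ge_0)
next
  case False
  let ?U = "UNIV - {0::'a}"
  have "bij_betw (\<lambda>y. x * y) ?U ?U"
    by (rule bij_betw_byWitness[where f' = "\<lambda>y. y / x"]) (use False in auto)
  then have "(\<Prod>y\<in>?U. y) = (\<Prod>y\<in>?U. x * y)"
    by (rule prod.reindex_bij_betw[symmetric])
  also have "\<dots> = x ^ card ?U * (\<Prod>y\<in>?U. y)"
    by (simp add: prod.distrib)
  finally have "x ^ card ?U = 1"
    by (simp add: prod_zero_iff)
  moreover have "card (UNIV :: 'a set) = Suc (card ?U)"
    by (rule card_Suc_Diff1[symmetric]) simp_all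
  ultimately show ?thesis by (metis mult_1_right power_Suc)
qed

lemma CHAR_eq_if_card_prime_power:
  assumes "prime p" and "card (UNIV :: 'a::{field,finite} set) = p ^ k"
  shows "CHAR('a) = p"
proof -
  have "prime CHAR('a)"
    by (simp add: finite_imp_CHAR_pos prime_CHAR_semidom)
  moreover have "CHAR('a) dvd p ^ k"
    using CHAR_dvd_CARD[where ?'a = 'a] assms(2) by simp
  ultimately show ?thesis
    using assms(1) by (meson prime_dvd_power primes_dvd_imp_eq)
qed

lemma card_roots_binomial_le:
  fixes c :: "'a::idom"
  assumes "k < n"
  shows "card {x. x ^ n = c * x ^ k} \<le> n"
proof -
  define P where "P = monom 1 n - monom c k"
  have "coeff P n = 1"
    using assms by (simp add: P_def coeff_monom)
  then have "P \<noteq> 0" by auto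
  moreover have "{x. x ^ n = c * x ^ k} = {x. poly P x = 0}"
    by (simp add: P_def poly_monom)
  moreover have "degree P \<le> n"
    unfolding P_def using assms
    by (intro degree_diff_le order.trans[OF degree_monom_le]) simp_all
  ultimately show ?thesis
    using card_poly_roots_bound[of P] by simp
qed

lemma inj_on_comp_bij_betw_iff:
  assumes "bij_betw h A B"
  shows "inj_on (g \<circ> h) A \<longleftrightarrow> inj_on g B"
  using assms comp_inj_on_iff[of h A g] by (simp add: bij_betw_def)

locale quadratic_frobenius =
  fixes q :: nat and F :: "'a::{field,finite} set"
  assumes F_def: "F = {x. x ^ q = x}"
    and card_UNIV: "card (UNIV :: 'a set) = q\<^sup>2"
    and frobenius_add: "(x + y :: 'a) ^ q = x ^ q + y ^ q"
begin

lemma q_gt_1: "q > 1"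
proof -
  have "card {0, 1 :: 'a} \<le> card (UNIV :: 'a set)"
    by (rule card_mono) auto
  then have "2 \<le> q\<^sup>2" by (simp add: card_UNIV)
  moreover have "q \<le> 1 \<Longrightarrow> q\<^sup>2 \<le> 1"
    using power_le_one[of q 2] by simp
  ultimately show ?thesis by linarith
qed

lemma frobenius_uminus: "(- x :: 'a) ^ q = - (x ^ q)"
proof -
  have "x ^ q + (- x) ^ q = 0"
    using frobenius_add[of x "- x"] q_gt_1 by (simp add: power_0_left)
  then show ?thesis by (simp add: eq_neg_iff_add_eq_0 add.commute)
qed

lemma frobenius_diff: "(x - y :: 'a) ^ q = x ^ q - y ^ q"
  using frobenius_add[of x "- y"] by (simp add: frobenius_uminus)

lemma frobenius_frobenius: "((x :: 'a) ^ q) ^ q = x"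
  by (metis card_UNIV power2_eq_square power_card_UNIV_eq_self power_mult)

lemma F_iff: "x \<in> F \<longleftrightarrow> x ^ q = x"
  by (simp add: F_def)

lemma F_0 [simp]: "0 \<in> F" and F_1 [simp]: "1 \<in> F"
  using q_gt_1 by (simp_all add: F_iff)

lemma F_add: "a \<in> F \<Longrightarrow> b \<in> F \<Longrightarrow> a + b \<in> F"
  by (simp add: F_iff frobenius_add)

lemma F_uminus: "a \<in> F \<Longrightarrow> - a \<in> F"
  by (simp add: F_iff frobenius_uminus)

lemma F_diff: "a \<in> F \<Longrightarrow> b \<in> F \<Longrightarrow> a - b \<in> F"
  by (simp add: F_iff frobenius_diff)

lemma F_mult: "a \<in> F \<Longrightarrow> b \<in> F \<Longrightarrow> a * b \<in> F"
  by (simp add: F_iff power_mult_distrib)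

lemma F_divide: "a \<in> F \<Longrightarrow> b \<in> F \<Longrightarrow> a / b \<in> F"
  by (simp add: F_iff power_divide)

lemma F_power: "a \<in> F \<Longrightarrow> a ^ k \<in> F"
  by (simp add: F_iff flip: power_mult) (metis mult.commute power_mult)

lemma F_of_nat: "of_nat k \<in> F"
  by (induction k) (simp_all add: F_add)

lemma F_numeral: "numeral k \<in> F"
  using F_of_nat[of "numeral k"] by simp

lemmas F_closed = F_add F_uminus F_diff F_mult F_divide F_power F_numeral

lemma F_mult_left_iff:
  assumes "c \<in> F" "c \<noteq> 0"
  shows "c * y \<in> F \<longleftrightarrow> y \<in> F"
proof
  assume "c * y \<in> F"
  then have "c * y / c \<in> F" using assms(1) by (rule F_divide)
  then show "y \<in> F" using assms(2) by simp
qed (use assms(1) in \<open>rule F_mult\<close>)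

lemma card_F_le: "card F \<le> q"
  using card_roots_binomial_le[OF q_gt_1, of 1] by (simp add: F_def)

lemma F_basis_coordinates:
  assumes \<theta>: "\<theta> \<notin> F"
  obtains a b where "a \<in> F" "b \<in> F" "x = a + b * \<theta>"
proof -
  \<comment> \<open>Solve \<open>x = a + b\<theta>\<close> together with its conjugate \<open>x\<^sup>q = a + b\<theta>\<^sup>q\<close>.\<close>
  have \<theta>q: "\<theta> ^ q - \<theta> \<noteq> 0" using \<theta> by (simp add: F_iff)
  define b where "b = (x ^ q - x) / (\<theta> ^ q - \<theta>)"
  define a where "a = x - b * \<theta>"
  have "b ^ q = (x - x ^ q) / (\<theta> - \<theta> ^ q)"
    by (simp add: b_def power_divide frobenius_diff frobenius_frobenius)
  also have "\<dots> = b"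
    unfolding b_def by (metis minus_diff_eq minus_divide_divide)
  finally have b: "b \<in> F" by (simp add: F_iff)
  have "b * (\<theta> ^ q - \<theta>) = x ^ q - x"
    using \<theta>q by (simp add: b_def)
  then have "b * \<theta> ^ q = x ^ q - x + b * \<theta>"
    by (simp add: algebra_simps)
  moreover have "a ^ q = x ^ q - b * \<theta> ^ q"
    using b by (simp add: a_def frobenius_diff power_mult_distrib F_iff)
  ultimately have "a ^ q = a"
    by (simp add: a_def)
  with b show ?thesis
    by (intro that[of a b]) (simp_all add: F_iff a_def)
qed

lemma bij_betw_F_basis:
  assumes \<theta>: "\<theta> \<notin> F"
  shows "bij_betw (\<lambda>(a, b). a + b * \<theta>) (F \<times> F) UNIV"
  unfolding bij_betw_def
proof
  show "inj_on (\<lambda>(a, b). a + b * \<theta>) (F \<times> F)"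
  proof (rule inj_onI, clarsimp)
    fix a b a' b' assume ab: "a \<in> F" "b \<in> F" "a' \<in> F" "b' \<in> F"
      and eq: "a + b * \<theta> = a' + b' * \<theta>"
    have "b = b'"
    proof (rule ccontr)
      assume "b \<noteq> b'"
      with eq have "\<theta> = (a - a') / (b' - b)"
        by (simp add: field_simps)
      with ab have "\<theta> \<in> F" by (simp add: F_closed)
      with \<theta> show False ..
    qed
    with eq show "a = a' \<and> b = b'" by simp
  qed
  show "(\<lambda>(a, b). a + b * \<theta>) ` (F \<times> F) = UNIV"
  proof -
    have "x \<in> (\<lambda>(a, b). a + b * \<theta>) ` (F \<times> F)" for x
    proof -
      obtain a b where "a \<in> F" "b \<in> F" "x = a + b * \<theta>"
        using F_basis_coordinates[OF \<theta>] .
      then show ?thesis by force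
    qed
    then show ?thesis by blast
  qed
qed

lemma card_F: "card F = q"
proof -
  have "q < q\<^sup>2"
    using q_gt_1 by (simp add: power2_eq_square)
  then have "card F < card (UNIV :: 'a set)"
    using card_F_le card_UNIV by linarith
  then have "F \<noteq> UNIV" by auto
  then obtain \<theta> where "\<theta> \<notin> F" by blast
  then have "card (F \<times> F) = q\<^sup>2"
    using bij_betw_same_card[OF bij_betw_F_basis] card_UNIV by simp
  then have "(card F)\<^sup>2 = q\<^sup>2"
    by (simp add: card_cartesian_product power2_eq_square)
  then show ?thesis by (simp add: power_eq_iff_eq_base)
qed


lemma F_power_q_minus_1:
  assumes "u \<in> F" "u \<noteq> 0"
  shows "u ^ (q - 1) = 1"
proof -
  have "u * u ^ (q - 1) = u * 1"
    using assms(1) q_gt_1 by (simp add: F_iff flip: power_Suc)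
  with assms(2) show ?thesis by simp
qed

lemma F_power_mod:
  assumes "u \<in> F" "u \<noteq> 0"
  shows "u ^ k = u ^ (k mod (q - 1))"
proof -
  have "u ^ k = (u ^ (q - 1)) ^ (k div (q - 1)) * u ^ (k mod (q - 1))"
    by (simp flip: power_mult power_add)
  with F_power_q_minus_1[OF assms] show ?thesis by simp
qed

lemma F_power_cong:
  assumes "u \<in> F" "i > 0" "j > 0" "[i = j] (mod (q - 1))"
  shows "u ^ i = u ^ j"
  using assms by (cases "u = 0") (simp_all add: F_power_mod[of u i] F_power_mod[of u j] cong_def zero_power)

lemma coprime_if_inj_on_power_F:
  assumes inj: "inj_on (\<lambda>u. u ^ m) F"
  shows "coprime m (q - 1)"
proof (rule ccontr)
  \<comment> \<open>Otherwise, for \<open>d = (q - 1) / gcd m (q - 1)\<close>, every \<open>u\<^sup>d\<close> with \<open>u \<in> F - {0}\<close> is an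
    \<open>m\<close>-th root of unity, hence \<open>1\<close> by injectivity; but \<open>X\<^sup>d - 1\<close> has only \<open>d < q - 1\<close> roots.\<close>
  define g where "g = gcd m (q - 1)"
  define d where "d = (q - 1) div g"
  assume "\<not> coprime m (q - 1)"
  then have "g \<noteq> 1" by (simp add: g_def coprime_iff_gcd_eq_1)
  moreover have "g \<noteq> 0" using q_gt_1 by (simp add: g_def)
  ultimately have "1 < g" by simp
  have qdg: "q - 1 = d * g" by (simp add: d_def g_def)
  then have "0 < d" using q_gt_1 by (cases d) simp_all
  with \<open>1 < g\<close> qdg have "d < q - 1" by simp
  have "u ^ d = 1" if u: "u \<in> F" "u \<noteq> 0" for u
  proof -
    obtain k where "m = g * k" by (metis g_def gcd_dvd1 dvdE)
    then have "(u ^ d) ^ m = (u ^ (q - 1)) ^ k"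
      unfolding qdg by (simp add: power_mult)
    then have "(u ^ d) ^ m = 1 ^ m"
      using F_power_q_minus_1[OF u] by simp
    then show ?thesis
      using inj_onD[OF inj] u(1) by (simp add: F_power)
  qed
  then have "F - {0} \<subseteq> {x. x ^ d = 1 * x ^ 0}" by auto
  then have "card (F - {0}) \<le> card {x :: 'a. x ^ d = 1 * x ^ 0}"
    by (rule card_mono[rotated]) simp
  also have "\<dots> \<le> d"
    using \<open>0 < d\<close> by (rule card_roots_binomial_le)
  finally have "card (F - {0}) \<le> d" .
  with \<open>d < q - 1\<close> show False by (simp add: card_F)
qed

lemma inj_on_power_F_if_coprime:
  assumes "m > 0" "coprime m (q - 1)"
  shows "inj_on (\<lambda>u. u ^ m) F"
proof -
  obtain s0 where "[m * s0 = 1] (mod (q - 1))"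
    using cong_solve_coprime_nat assms(2) by auto
  moreover have "[m * (s0 + (q - 1)) = m * s0] (mod (q - 1))"
    by (simp add: cong_def distrib_left)
  ultimately have s: "[m * (s0 + (q - 1)) = 1] (mod (q - 1))"
    by (rule cong_trans[rotated])
  have pos: "m * (s0 + (q - 1)) > 0"
    using assms(1) q_gt_1 by simp
  show ?thesis
  proof (rule inj_onI)
    fix u v assume uv: "u \<in> F" "v \<in> F" "u ^ m = v ^ m"
    have "u = (u ^ m) ^ (s0 + (q - 1))"
      using F_power_cong[OF uv(1) pos _ s] by (simp add: power_mult)
    also have "\<dots> = v"
      using F_power_cong[OF uv(2) pos _ s] by (simp add: uv(3) power_mult)
    finally show "u = v" .
  qed
qed

lemma power_F_image:
  assumes "inj_on (\<lambda>u. u ^ m) F"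
  shows "(\<lambda>u. u ^ m) ` F = F"
  using assms by (intro endo_inj_surj) (auto intro: F_power)

lemma inj_on_power_sum_F:
  assumes "A \<noteq> 0" "B / A \<notin> F"
    and inj_m: "inj_on (\<lambda>u. u ^ m) F" and inj_n: "inj_on (\<lambda>v. v ^ n) F"
  shows "inj_on (\<lambda>(u, v). A * u ^ m + B * v ^ n) (F \<times> F)"
proof (rule inj_onI, clarsimp)
  fix u v u' v' assume F: "u \<in> F" "v \<in> F" "u' \<in> F" "v' \<in> F"
    and eq: "A * u ^ m + B * v ^ n = A * u' ^ m + B * v' ^ n"
  have vn: "v ^ n = v' ^ n"
  proof (rule ccontr)
    assume "v ^ n \<noteq> v' ^ n"
    with eq assms(1) have "B / A = (u' ^ m - u ^ m) / (v ^ n - v' ^ n)"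
      by (simp add: field_simps)
    with F assms(2) show False by (simp add: F_closed)
  qed
  with eq assms(1) have "u ^ m = u' ^ m" by simp
  with vn F show "u = u' \<and> v = v'"
    using inj_onD[OF inj_m] inj_onD[OF inj_n] by blast
qed

lemma inj_on_power_sum_F_iff:
  assumes "A \<noteq> 0" "B \<noteq> 0" "m > 0" "n > 0"
  shows "inj_on (\<lambda>(u, v). A * u ^ m + B * v ^ n) (F \<times> F) \<longleftrightarrow>
         coprime m (q - 1) \<and> coprime n (q - 1) \<and> B / A \<notin> F"
    (is "inj_on ?G _ \<longleftrightarrow> _")
proof
  assume inj: "inj_on ?G (F \<times> F)"
  have inj_m: "inj_on (\<lambda>u. u ^ m) F"
    using inj_onD[OF inj, of "(_, 0)" "(_, 0)"] assms by (auto intro!: inj_onI)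
  have inj_n: "inj_on (\<lambda>v. v ^ n) F"
    using inj_onD[OF inj, of "(0, _)" "(0, _)"] assms by (auto intro!: inj_onI)
  have "B / A \<notin> F"
  proof
    assume "B / A \<in> F"
    then obtain u where u: "u \<in> F" "u ^ m = B / A"
      using power_F_image[OF inj_m] by (metis imageE)
    then have "?G (u, 0) = ?G (0, 1)"
      using assms by (simp add: zero_power)
    with u(1) show False
      using inj_onD[OF inj, of "(u, 0)" "(0, 1)"] by simp
  qed
  with inj_m inj_n show "coprime m (q - 1) \<and> coprime n (q - 1) \<and> B / A \<notin> F"
    by (blast intro: coprime_if_inj_on_power_F)
next
  assume "coprime m (q - 1) \<and> coprime n (q - 1) \<and> B / A \<notin> F"
  with assms show "inj_on ?G (F \<times> F)"
    by (blast intro: inj_on_power_sum_F inj_on_power_F_if_coprime)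
qed

end

lemma quadratic_frobenius_prime_power:
  assumes "prime p" "q = p ^ k" "card (UNIV :: 'a::{field,finite} set) = q\<^sup>2"
  shows "quadratic_frobenius q {x :: 'a. x ^ q = x}"
proof
  have "CHAR('a) = p"
    using CHAR_eq_if_card_prime_power[OF assms(1), of "k * 2"] assms(2,3) by (simp add: power_mult)
  then show "(x + y) ^ q = x ^ q + y ^ q" for x y :: 'a
    using assms(1,2) freshmans_dream' by blast
qed (use assms(3) in simp_all)

locale primitive_cube_root = quadratic_frobenius q F for q and F :: "'a::{field,finite} set" +
  fixes \<omega> :: 'a
  assumes q_mod_3: "q mod 3 = 2"
    and omega_cube: "\<omega> ^ 3 = 1"
    and omega_neq_1: "\<omega> \<noteq> 1"
begin

lemma omega_neq_0: "\<omega> \<noteq> 0"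
  using omega_cube by auto

lemma omega_quadratic: "\<omega>\<^sup>2 + \<omega> + 1 = 0"
proof -
  have "(\<omega> - 1) * (\<omega>\<^sup>2 + \<omega> + 1) = \<omega> ^ 3 - 1"
    by (simp add: algebra_simps power2_eq_square power3_eq_cube)
  with omega_cube omega_neq_1 show ?thesis by simp
qed

lemma three_neq_0: "(3 :: 'a) \<noteq> 0"
proof
  assume "(3 :: 'a) = 0"
  moreover have "(\<omega> - 1)\<^sup>2 = (\<omega>\<^sup>2 + \<omega> + 1) - 3 * \<omega>"
    by (simp add: power2_eq_square algebra_simps)
  ultimately show False
    using omega_neq_1 omega_quadratic by simp
qed

lemma omega_power_mod: "\<omega> ^ k = \<omega> ^ (k mod 3)"
proof -
  have "\<omega> ^ k = (\<omega> ^ 3) ^ (k div 3) * \<omega> ^ (k mod 3)"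
    by (simp flip: power_mult power_add)
  then show ?thesis by (simp add: omega_cube)
qed

lemma omega_power_eq_1_iff: "\<omega> ^ k = 1 \<longleftrightarrow> 3 dvd k"
proof -
  have "\<omega>\<^sup>2 \<noteq> 1"
  proof
    assume "\<omega>\<^sup>2 = 1"
    then have "\<omega> ^ 3 = \<omega>" by (simp add: power3_eq_cube power2_eq_square)
    with omega_cube omega_neq_1 show False by simp
  qed
  moreover have "k mod 3 = 0 \<or> k mod 3 = 1 \<or> k mod 3 = 2" by presburger
  ultimately show ?thesis
    using omega_neq_1 by (auto simp: omega_power_mod[of k] dvd_eq_mod_eq_0)
qed

lemma omega_power_q: "\<omega> ^ q = \<omega>\<^sup>2"
  using omega_power_mod[of q] q_mod_3 by simp

lemma omega_power_in_F_iff: "\<omega> ^ k \<in> F \<longleftrightarrow> 3 dvd k"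
proof -
  have "(\<omega> ^ k) ^ q = (\<omega> ^ q) ^ k"
    by (simp flip: power_mult add: mult.commute)
  also have "\<dots> = \<omega> ^ k * \<omega> ^ k"
    by (simp add: omega_power_q power2_eq_square power_mult_distrib)
  finally have "\<omega> ^ k \<in> F \<longleftrightarrow> \<omega> ^ k = 1"
    using omega_neq_0 by (simp add: F_iff)
  then show ?thesis by (simp add: omega_power_eq_1_iff)
qed

lemma omega_notin_F: "\<omega> \<notin> F"
  using omega_power_in_F_iff[of 1] by simp

lemma frobenius_omega_basis:
  assumes "a \<in> F" "b \<in> F"
  shows "(a + b * \<omega>) ^ q = a + b * \<omega>\<^sup>2"
  using assms by (simp add: frobenius_add power_mult_distrib omega_power_q F_iff)

lemma bij_betw_F_coordinate_change:
  "bij_betw (\<lambda>(a, b). (a + b, 2 * b - a)) (F \<times> F) (F \<times> F)"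
proof -
  have "inj_on (\<lambda>(a, b). (a + b, 2 * b - a)) (F \<times> F)"
  proof (rule inj_onI, clarify)
    fix a b a' b' :: 'a
    assume eq: "a + b = a' + b'" "2 * b - a = 2 * b' - a'"
    have "3 * b = (a + b) + (2 * b - a)"
      by (simp add: algebra_simps)
    also have "\<dots> = (a' + b') + (2 * b' - a')"
      by (simp only: eq)
    also have "\<dots> = 3 * b'"
      by (simp add: algebra_simps)
    finally have "b = b'"
      using three_neq_0 by simp
    with eq show "a = a' \<and> b = b'" by simp
  qed
  moreover have "(\<lambda>(a, b). (a + b, 2 * b - a)) ` (F \<times> F) \<subseteq> F \<times> F"
    by (auto intro!: F_closed)
  ultimately show ?thesis
    by (simp add: bij_betw_def endo_inj_surj)
qed

lemma omega_quotient_in_F_iff: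
  assumes "s \<in> F" "s \<noteq> 0"
  shows "s * \<omega> ^ e * (\<omega>\<^sup>2) ^ n / (- \<omega>\<^sup>2) ^ m \<in> F \<longleftrightarrow> 3 dvd (e + 2 * n + m)"
proof -
  have "(- \<omega>\<^sup>2) * (- \<omega>) = 1"
    using omega_cube by (simp add: power2_eq_square power3_eq_cube mult_ac)
  then have "(- \<omega>) ^ m * (- \<omega>\<^sup>2) ^ m = 1"
    by (metis mult.commute power_mult_distrib power_one)
  then have "s * \<omega> ^ e * (\<omega>\<^sup>2) ^ n / (- \<omega>\<^sup>2) ^ m = s * \<omega> ^ e * (\<omega>\<^sup>2) ^ n * (- \<omega>) ^ m"
    using omega_neq_0 by (simp add: divide_eq_eq mult.assoc)
  also have "\<dots> = (s * (- 1) ^ m) * (\<omega> ^ e * (\<omega>\<^sup>2) ^ n * \<omega> ^ m)"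
    by (simp only: power_minus[of \<omega>] mult_ac)
  also have "\<omega> ^ e * (\<omega>\<^sup>2) ^ n * \<omega> ^ m = \<omega> ^ (e + 2 * n + m)"
    by (simp only: power_add power_mult)
  finally show ?thesis
    using assms by (simp add: F_mult_left_iff F_closed omega_power_in_F_iff)
qed

lemma omega_binomial_basis:
  assumes "a \<in> F" "b \<in> F" and x: "x = a + b * \<omega>"
  shows "(x + \<omega> * x ^ q) ^ m + c * (\<omega> * x + x ^ q) ^ n =
         (- \<omega>\<^sup>2) ^ m * (a + b) ^ m + c * (\<omega>\<^sup>2) ^ n * (2 * b - a) ^ n"
proof -
  have xq: "x ^ q = a + b * \<omega>\<^sup>2"
    using assms by (simp add: frobenius_omega_basis)
  have one_plus: "1 + \<omega> = - \<omega>\<^sup>2"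
    using omega_quadratic by (simp add: eq_neg_iff_add_eq_0 algebra_simps)
  have "x + \<omega> * x ^ q = (a + b) * (1 + \<omega>) + b * (\<omega> ^ 3 - 1)"
    unfolding xq unfolding x by (simp add: algebra_simps power2_eq_square power3_eq_cube)
  then have 1: "x + \<omega> * x ^ q = - \<omega>\<^sup>2 * (a + b)"
    using one_plus omega_cube by (simp add: algebra_simps)
  have "\<omega> * x + x ^ q = a * (1 + \<omega>) + 2 * b * \<omega>\<^sup>2"
    unfolding xq unfolding x by (simp add: algebra_simps power2_eq_square)
  then have 2: "\<omega> * x + x ^ q = \<omega>\<^sup>2 * (2 * b - a)"
    using one_plus by (simp add: algebra_simps)
  show ?thesis
    unfolding 1 2 by (simp only: power_mult_distrib mult_ac)
qed

lemma bij_omega_binomial_iff: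
  assumes "s \<in> F" "s \<noteq> 0" "m > 0" "n > 0"
  shows "bij (\<lambda>x. (x + \<omega> * x ^ q) ^ m + s * \<omega> ^ e * (\<omega> * x + x ^ q) ^ n) \<longleftrightarrow>
         coprime (m * n) (q - 1) \<and> \<not> (3::int) dvd (int e + int m - int n)"
    (is "bij ?f \<longleftrightarrow> _")
proof -
  define A where "A = (- \<omega>\<^sup>2) ^ m"
  define B where "B = s * \<omega> ^ e * (\<omega>\<^sup>2) ^ n"
  let ?basis = "\<lambda>(a, b). a + b * \<omega>"
  let ?coord = "\<lambda>(a, b). (a + b, 2 * b - a)"
  let ?G = "\<lambda>(u, v). A * u ^ m + B * v ^ n"
  have "inj ?f \<longleftrightarrow> inj_on (?f \<circ> ?basis) (F \<times> F)"
    by (rule inj_on_comp_bij_betw_iff[OF bij_betw_F_basis[OF omega_notin_F], symmetric])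
  also have "\<dots> \<longleftrightarrow> inj_on (?G \<circ> ?coord) (F \<times> F)"
    by (rule inj_on_cong) (auto simp: A_def B_def omega_binomial_basis[OF _ _ refl])
  also have "\<dots> \<longleftrightarrow> inj_on ?G (F \<times> F)"
    by (rule inj_on_comp_bij_betw_iff[OF bij_betw_F_coordinate_change])
  also have "\<dots> \<longleftrightarrow> coprime m (q - 1) \<and> coprime n (q - 1) \<and> B / A \<notin> F"
    using assms omega_neq_0 by (intro inj_on_power_sum_F_iff) (simp_all add: A_def B_def)
  finally have "inj ?f \<longleftrightarrow> coprime m (q - 1) \<and> coprime n (q - 1) \<and> B / A \<notin> F" .
  moreover have "B / A \<in> F \<longleftrightarrow> (3::int) dvd (int e + int m - int n)"
    unfolding A_def B_def omega_quotient_in_F_iff[OF assms(1,2)] by presburger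
  moreover have "bij ?f \<longleftrightarrow> inj ?f"
    unfolding bij_def using finite_UNIV_inj_surj[OF finite_UNIV, of ?f] by blast
  ultimately show ?thesis
    by (simp only: coprime_mult_left_iff conj_assoc)
qed

end

theorem proposition3p6:
  fixes q m n :: nat and \<omega> \<epsilon> :: "'a::{field,finite}" and f :: "'a \<Rightarrow> 'a"
  assumes q_pp: "\<exists>p k. prime p \<and> k > 0 \<and> q = p ^ k"
    and q_mod: "q mod 3 = 2"
    and card: "card (UNIV :: 'a set) = q ^ 2"
    and m_pos: "m > 0" and n_pos: "n > 0"
    and \<omega>_ord: "\<omega> ^ 3 = 1" "\<omega> \<noteq> 1"
    and \<epsilon>_in: "\<epsilon> \<in> subfield_q_star q \<union> {\<omega>, -\<omega>, \<omega>^2, -(\<omega>^2)}"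
    and f_def: "f = (\<lambda>x. (x + \<omega> * x ^ q) ^ m + \<epsilon> * (\<omega> * x + x ^ q) ^ n)"
  shows "(\<epsilon> \<in> subfield_q_star q \<longrightarrow>
            (permutes_field f \<longleftrightarrow> gcd (m * n) (q - 1) = 1 \<and> \<not> (3::int) dvd (int m - int n)))
       \<and> (\<epsilon> \<in> {\<omega>, -\<omega>} \<longrightarrow>
            (permutes_field f \<longleftrightarrow> gcd (m * n) (q - 1) = 1 \<and> \<not> (3::int) dvd (1 + int m - int n)))
       \<and> (\<epsilon> \<in> {\<omega>^2, -(\<omega>^2)} \<longrightarrow>
            (permutes_field f \<longleftrightarrow> gcd (m * n) (q - 1) = 1 \<and> \<not> (3::int) dvd (2 + int m - int n)))"
proof -
  obtain p k where "prime p" "q = p ^ k"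
    using q_pp by blast
  then interpret primitive_cube_root q "{x. x ^ q = x}" \<omega>
    using card q_mod \<omega>_ord
    by (intro primitive_cube_root.intro quadratic_frobenius_prime_power primitive_cube_root_axioms.intro)
  have key: "permutes_field f \<longleftrightarrow> gcd (m * n) (q - 1) = 1 \<and> \<not> (3::int) dvd (int e + int m - int n)"
    if "s ^ q = s" "s \<noteq> 0" "\<epsilon> = s * \<omega> ^ e" for s e
    using bij_omega_binomial_iff[of s m n e] that m_pos n_pos
    by (simp add: f_def permutes_field_def coprime_iff_gcd_eq_1)
  have "(-1 :: 'a) ^ q = -1"
    using frobenius_uminus[of 1] by simp
  then show ?thesis
    using key[of \<epsilon> 0] key[of 1 1] key[of "-1" 1] key[of 1 2] key[of "-1" 2] \<epsilon>_in
    by (auto simp: subfield_q_star_def)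
qed

end
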